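(* Suppose an iteration of Dual KOSZ starting from potentials $\mathbf x^t$ samples a tree edge $(i,j)\in T$ with probability $P_{ij}=\frac1\tau\cdot\frac{r(i,j)}{R(C(i,j))}$, where $\tau=\sum_{(i,j)\in T}\frac{r(i,j)}{R(C(i,j))}$, producing $\mathbf x^{t+1}$. Then $$\mathcal B(\mathbf x^* )-\mathbb E[\mathcal B(\mathbf x^{t+1})]\le\Big(1-\frac1\tau\Big)\big(\mathcal B(\mathbf x^* )-\mathcal B(\mathbf x^t)\big).$$
   Context: $G=(V,E)$ is a connected undirected graph with resistances $r(e)>0$; $\mathbf b\in\mathbb R^V$ with $\sum_ib(i)=0$; $\mathbf L=\sum_{ij\in E}\frac1{r(i,j)}(\mathbf e_i-\mathbf e_j)(\mathbf e_i-\mathbf e_j)^\top$, $\mathcal B(\mathbf x)=\mathbf b^\top\mathbf x-\frac12\mathbf x^\top\mathbf L\mathbf x$, and $\mathbf x^*$ maximizes $\mathcal B$. $T$ is a spanning tree, rooted, with tree edges directed toward the root; for a tree edge $(i,j)$, $C(i,j)$ is the vertex set of the component of $T-ij$ containing $i$. For $C\subset V$: $R(C)=(\sum_{e\in\delta(C)}1/r(e))^{-1}$, $b(C)=\sum_{v\in C}b(v)$, $f(C)=\sum_{kl\in E,k\in C,l\notin C}\frac{x^t(k)-x^t(l)}{r(k,l)}$. One iteration of Dual KOSZ with sampled edge $(i,j)$: with $C=C(i,j)$ and $\Delta=(b(C)-f(C))R(C)$, set $\mathbf x^{t+1}=\mathbf x^t+\Delta\mathbbm 1_C$. The expectation is over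 the sampled edge. *)

theory Defs
  imports Main "HOL-Library.Sum_of_Squares" Complex_Main
begin

(* Graph: finite vertex set V, edge set E of ordered pairs, each undirected edge
   listed once in an arbitrary orientation; r symmetric resistance function. *)

definition undirected_graph :: "'a set \<Rightarrow> ('a \<times> 'a) set \<Rightarrow> bool" where
  "undirected_graph V E \<longleftrightarrow> finite V \<and> E \<subseteq> V \<times> V \<and>
     (\<forall>i j. (i,j) \<in> E \<longrightarrow> i \<noteq> j \<and> (j,i) \<notin> E)"

definition connected_graph :: "'a set \<Rightarrow> ('a \<times> 'a) set \<Rightarrow> bool" where
  "connected_graph V E \<longleftrightarrow> (\<forall>u\<in>V. \<forall>v\<in>V. (u,v) \<in> (E \<union> E\<inverse>)\<^sup>*)"

(* T is a spanning tree of (V,E) rooted at \<rho>, with every tree edge directed toward the root *)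
definition rooted_spanning_tree :: "'a set \<Rightarrow> ('a \<times> 'a) set \<Rightarrow> 'a \<Rightarrow> ('a \<times> 'a) set \<Rightarrow> bool" where
  "rooted_spanning_tree V E \<rho> T \<longleftrightarrow> \<rho> \<in> V \<and> T \<subseteq> E \<union> E\<inverse> \<and>
     (\<forall>j. (\<rho>, j) \<notin> T) \<and>
     (\<forall>v\<in>V - {\<rho>}. \<exists>!j. (v, j) \<in> T) \<and>
     (\<forall>v\<in>V. (v, \<rho>) \<in> T\<^sup>*)"

definition tree_comp :: "('a \<times> 'a) set \<Rightarrow> 'a \<times> 'a \<Rightarrow> 'a set" where
  "tree_comp T e = {w. (fst e, w) \<in> ((T - {e}) \<union> (T - {e})\<inverse>)\<^sup>*}"

definition cut_edges :: "('a \<times> 'a) set \<Rightarrow> 'a set \<Rightarrow> ('a \<times> 'a) set" where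
  "cut_edges E C = {(k,l) \<in> E. (k \<in> C) \<noteq> (l \<in> C)}"

definition Rcut :: "('a \<times> 'a) set \<Rightarrow> ('a \<Rightarrow> 'a \<Rightarrow> real) \<Rightarrow> 'a set \<Rightarrow> real" where
  "Rcut E r C = inverse (\<Sum>(k,l)\<in>cut_edges E C. 1 / r k l)"

definition bset :: "('a \<Rightarrow> real) \<Rightarrow> 'a set \<Rightarrow> real" where
  "bset b C = (\<Sum>v\<in>C. b v)"

definition fcut :: "('a \<times> 'a) set \<Rightarrow> ('a \<Rightarrow> 'a \<Rightarrow> real) \<Rightarrow> ('a \<Rightarrow> real) \<Rightarrow> 'a set \<Rightarrow> real" where
  "fcut E r x C = (\<Sum>(k,l)\<in>cut_edges E C.
       if k \<in> C then (x k - x l) / r k l else (x l - x k) / r k l)"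

definition lap_form :: "('a \<times> 'a) set \<Rightarrow> ('a \<Rightarrow> 'a \<Rightarrow> real) \<Rightarrow> ('a \<Rightarrow> real) \<Rightarrow> real" where
  "lap_form E r x = (\<Sum>(i,j)\<in>E. (x i - x j)\<^sup>2 / r i j)"

definition Bobj :: "'a set \<Rightarrow> ('a \<times> 'a) set \<Rightarrow> ('a \<Rightarrow> 'a \<Rightarrow> real) \<Rightarrow> ('a \<Rightarrow> real) \<Rightarrow> ('a \<Rightarrow> real) \<Rightarrow> real" where
  "Bobj V E r b x = (\<Sum>v\<in>V. b v * x v) - 1/2 * lap_form E r x"

definition kosz_step :: "('a \<times> 'a) set \<Rightarrow> ('a \<times> 'a) set \<Rightarrow> ('a \<Rightarrow> 'a \<Rightarrow> real) \<Rightarrow> ('a \<Rightarrow> real)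
    \<Rightarrow> ('a \<Rightarrow> real) \<Rightarrow> 'a \<times> 'a \<Rightarrow> ('a \<Rightarrow> real)" where
  "kosz_step E T r b x e =
     (let C = tree_comp T e; \<Delta> = (bset b C - fcut E r x C) * Rcut E r C
      in (\<lambda>v. x v + (if v \<in> C then \<Delta> else 0)))"

definition tau :: "('a \<times> 'a) set \<Rightarrow> ('a \<times> 'a) set \<Rightarrow> ('a \<Rightarrow> 'a \<Rightarrow> real) \<Rightarrow> real" where
  "tau E T r = (\<Sum>(i,j)\<in>T. r i j / Rcut E r (tree_comp T (i,j)))"

definition sample_prob :: "('a \<times> 'a) set \<Rightarrow> ('a \<times> 'a) set \<Rightarrow> ('a \<Rightarrow> 'a \<Rightarrow> real) \<Rightarrow> 'a \<times> 'a \<Rightarrow> real" where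
  "sample_prob E T r e = (1 / tau E T r) * (r (fst e) (snd e) / Rcut E r (tree_comp T e))"

end

(*
  B is a concave quadratic, and a Dual KOSZ step on the tree cut C = C(e) maximizes B along the
  direction 1_C; it therefore gains exactly R(C) (b(C) - f(C))^2 / 2.

  Conversely, write any y as x + z. The indicators of the tree cuts telescope along root paths:
  z - z(root) = sum_e (z_i - z_j) 1_C(e) on V. As b sums to 0, the linear part of B(y) - B(x) thus
  equals sum_e (z_i - z_j) (b(C(e)) - f(C(e))). Keeping only the tree edges in the quadratic part
  and completing the square edgewise gives B(y) - B(x) <= sum_e r(e) (b(C(e)) - f(C(e)))^2 / 2.
  With P_e = r(e) / (tau R(C(e))) the expected gain of one step is exactly 1/tau times this bound.
*)
theory Submission
  imports Defs "HOL-Library.Indicator_Function"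
begin

definition lap_bilinear ::
    "('a \<times> 'a) set \<Rightarrow> ('a \<Rightarrow> 'a \<Rightarrow> real) \<Rightarrow> ('a \<Rightarrow> real) \<Rightarrow> ('a \<Rightarrow> real) \<Rightarrow> real"
  where "lap_bilinear E r x y = (\<Sum>(i,j)\<in>E. (x i - x j) * (y i - y j) / r i j)"

lemma lap_form_add:
  "lap_form E r (\<lambda>v. x v + z v) = lap_form E r x + 2 * lap_bilinear E r z x + lap_form E r z"
proof -
  have "(x i + z i - (x j + z j))\<^sup>2 / r i j
      = (x i - x j)\<^sup>2 / r i j + 2 * ((z i - z j) * (x i - x j) / r i j) + (z i - z j)\<^sup>2 / r i j" for i j
    by (simp add: power2_eq_square add_divide_distrib[symmetric] algebra_simps)
  then show ?thesis
    unfolding lap_form_def lap_bilinear_def by (simp add: split_def sum.distrib sum_distrib_left)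
qed

lemma lap_form_scale: "lap_form E r (\<lambda>v. c * x v) = c\<^sup>2 * lap_form E r x"
  unfolding lap_form_def split_def sum_distrib_left
  by (intro sum.cong refl) (simp add: power_mult_distrib flip: right_diff_distrib)

lemma lap_bilinear_scale_left: "lap_bilinear E r (\<lambda>v. c * x v) y = c * lap_bilinear E r x y"
  unfolding lap_bilinear_def split_def sum_distrib_left
  by (intro sum.cong refl) (simp flip: right_diff_distrib)

lemma lap_bilinear_sum_left:
  "lap_bilinear E r (\<lambda>v. \<Sum>k\<in>K. c k * f k v) y = (\<Sum>k\<in>K. c k * lap_bilinear E r (f k) y)"
proof -
  have "(\<Sum>k\<in>K. c k * f k i) - (\<Sum>k\<in>K. c k * f k j) = (\<Sum>k\<in>K. c k * (f k i - f k j))" for i j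
    by (simp add: sum_subtractf right_diff_distrib)
  then have "lap_bilinear E r (\<lambda>v. \<Sum>k\<in>K. c k * f k v) y
      = (\<Sum>(i,j)\<in>E. \<Sum>k\<in>K. c k * ((f k i - f k j) * (y i - y j) / r i j))"
    unfolding lap_bilinear_def by (simp add: sum_distrib_right sum_divide_distrib mult.assoc)
  also have "\<dots> = (\<Sum>k\<in>K. c k * lap_bilinear E r (f k) y)"
    unfolding lap_bilinear_def split_def by (simp add: sum_distrib_left flip: sum.swap[of _ K])
  finally show ?thesis .
qed

lemma lap_bilinear_cong_left:
  assumes "E \<subseteq> V \<times> V" and "\<And>v. v \<in> V \<Longrightarrow> x v = x' v"
  shows "lap_bilinear E r x y = lap_bilinear E r x' y"
  unfolding lap_bilinear_def using assms by (intro sum.cong) auto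

lemma lap_bilinear_shift_left: "lap_bilinear E r (\<lambda>v. x v - c) y = lap_bilinear E r x y"
  unfolding lap_bilinear_def by simp

lemma fcut_eq_lap_bilinear:
  assumes "finite E"
  shows "fcut E r x C = lap_bilinear E r (indicator C) x"
proof -
  have "fcut E r x C = (\<Sum>(i,j)\<in>cut_edges E C. (indicator C i - indicator C j) * (x i - x j) / r i j)"
    unfolding fcut_def by (intro sum.cong) (auto simp: cut_edges_def indicator_def)
  also have "\<dots> = lap_bilinear E r (indicator C) x"
    unfolding lap_bilinear_def using assms
    by (intro sum.mono_neutral_left) (auto simp: cut_edges_def indicator_def)
  finally show ?thesis .
qed

lemma lap_form_indicator:
  assumes "finite E"
  shows "lap_form E r (indicator C) = (\<Sum>(k,l)\<in>cut_edges E C. 1 / r k l)"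
proof -
  have "(\<Sum>(k,l)\<in>cut_edges E C. 1 / r k l)
      = (\<Sum>(i,j)\<in>cut_edges E C. (indicator C i - indicator C j)\<^sup>2 / r i j)"
    by (intro sum.cong) (auto simp: cut_edges_def)
  also have "\<dots> = lap_form E r (indicator C)"
    unfolding lap_form_def using assms
    by (intro sum.mono_neutral_left) (auto simp: cut_edges_def indicator_def)
  finally show ?thesis by simp
qed

lemma bset_eq_sum_indicator:
  assumes "finite V" and "C \<subseteq> V"
  shows "bset b C = (\<Sum>v\<in>V. b v * indicator C v)"
proof -
  have "(\<Sum>v\<in>V. b v * indicator C v) = (\<Sum>v\<in>C. b v * indicator C v)"
    using assms by (intro sum.mono_neutral_right) auto
  then show ?thesis by (simp add: bset_def)
qed

lemma Bobj_add:
  "Bobj V E r b (\<lambda>v. x v + z v)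
     = Bobj V E r b x + ((\<Sum>v\<in>V. b v * z v) - lap_bilinear E r z x) - lap_form E r z / 2"
  unfolding Bobj_def lap_form_add by (simp add: distrib_left sum.distrib algebra_simps)

lemma Bobj_add_indicator:
  assumes "finite V" and "finite E" and "C \<subseteq> V"
  shows "Bobj V E r b (\<lambda>v. x v + \<Delta> * indicator C v) = Bobj V E r b x
     + \<Delta> * (bset b C - fcut E r x C) - \<Delta>\<^sup>2 / 2 * lap_form E r (indicator C)"
proof -
  have "(\<Sum>v\<in>V. b v * (\<Delta> * indicator C v)) = \<Delta> * bset b C"
    using bset_eq_sum_indicator[OF assms(1,3)] by (simp add: sum_distrib_left mult_ac)
  moreover have "lap_bilinear E r (\<lambda>v. \<Delta> * indicator C v) x = \<Delta> * fcut E r x C"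
    unfolding lap_bilinear_scale_left fcut_eq_lap_bilinear[OF assms(2)] ..
  ultimately show ?thesis
    unfolding Bobj_add lap_form_scale by (simp add: right_diff_distrib)
qed

lemma Bobj_kosz_step:
  assumes "finite V" and "finite E" and "tree_comp T e \<subseteq> V"
  shows "Bobj V E r b (kosz_step E T r b x e) = Bobj V E r b x
     + (bset b (tree_comp T e) - fcut E r x (tree_comp T e))\<^sup>2 * Rcut E r (tree_comp T e) / 2"
proof -
  define C where "C = tree_comp T e"
  define D where "D = bset b C - fcut E r x C"
  define K where "K = lap_form E r (indicator C)"
  have R: "Rcut E r C = inverse K"
    unfolding Rcut_def K_def lap_form_indicator[OF assms(2)] ..
  have "kosz_step E T r b x e = (\<lambda>v. x v + D * inverse K * indicator C v)"
    unfolding kosz_step_def Let_def C_def[symmetric] D_def[symmetric] R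
    by (simp add: fun_eq_iff split: split_indicator)
  then have "Bobj V E r b (kosz_step E T r b x e)
      = Bobj V E r b x + D * inverse K * D - (D * inverse K)\<^sup>2 / 2 * K"
    using Bobj_add_indicator[OF assms(1,2) assms(3)[folded C_def]] by (simp add: D_def K_def)
  also have "\<dots> = Bobj V E r b x + D\<^sup>2 * inverse K / 2"
    by (cases "K = 0") (simp_all add: field_simps power2_eq_square)
  finally show ?thesis
    using R unfolding C_def D_def by simp
qed

locale rooted_tree =
  fixes V :: "'a set" and T :: "('a \<times> 'a) set" and \<rho> :: 'a
  assumes finite_vertices: "finite V"
    and tree_edges: "T \<subseteq> V \<times> V"
    and root_no_parent: "(\<rho>, j) \<notin> T"
    and ex1_parent: "v \<in> V - {\<rho>} \<Longrightarrow> \<exists>!j. (v, j) \<in> T"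
    and reaches_root: "v \<in> V \<Longrightarrow> (v, \<rho>) \<in> T\<^sup>*"
begin

lemma finite_tree_edges: "finite T"
  using tree_edges finite_vertices by (meson finite_SigmaI finite_subset)

lemma parent_unique: "(u, w) \<in> T \<Longrightarrow> (u, w') \<in> T \<Longrightarrow> w = w'"
  using ex1_parent tree_edges root_no_parent by blast

lemma acyclic_tree: "acyclic T"
  unfolding acyclic_def
proof (intro allI notI)
  fix i assume "(i, i) \<in> T\<^sup>+"
  then obtain p where ip: "(i, p) \<in> T" and p_i: "(p, i) \<in> T\<^sup>*"
    by (meson tranclD)
  \<comment> \<open>Parents are unique, so every walk out of \<open>i\<close> stays on the cycle through \<open>i\<close>.\<close>
  have cycle_back: "(u, i) \<in> T\<^sup>*" if "(i, u) \<in> T\<^sup>*" for u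
    using that
  proof (induction rule: rtrancl_induct)
    case base
    show ?case by simp
  next
    case (step u w)
    have "u = i \<or> (\<exists>c. (u, c) \<in> T \<and> (c, i) \<in> T\<^sup>*)"
      using step.IH by (meson converse_rtranclE)
    then show ?case using step.hyps(2) ip p_i parent_unique by metis
  qed
  have "(\<rho>, i) \<in> T\<^sup>*" using cycle_back reaches_root ip tree_edges by blast
  then have "\<rho> = i" using root_no_parent by (metis converse_rtranclE)
  then show False using ip root_no_parent by simp
qed

lemma tree_comp_eq_descendants:
  assumes "e \<in> T"
  shows "tree_comp T e = {v. (v, fst e) \<in> T\<^sup>*}"
proof -
  obtain i j where e: "e = (i, j)" by fastforce
  define S where "S = T - {(i, j)}"
  have desc: "(w, i) \<in> T\<^sup>*" if "(i, w) \<in> (S \<union> S\<inverse>)\<^sup>*" for w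
    using that
  proof (induction rule: rtrancl_induct)
    case base
    show ?case by simp
  next
    case (step u w)
    show ?case
    proof (cases "(u, w) \<in> S")
      case True
      then have uw: "(u, w) \<in> T" "(u, w) \<noteq> (i, j)" unfolding S_def by auto
      then have "u \<noteq> i" using assms e parent_unique by metis
      then obtain c where "(u, c) \<in> T" "(c, i) \<in> T\<^sup>*" using step.IH by (meson converse_rtranclE)
      then show ?thesis using uw parent_unique by metis
    next
      case False
      then have "(w, u) \<in> T" using step.hyps(2) unfolding S_def by auto
      then show ?thesis using step.IH by (meson converse_rtrancl_into_rtrancl)
    qed
  qed
  have conn: "(i, v) \<in> (S \<union> S\<inverse>)\<^sup>*" if "(v, i) \<in> T\<^sup>*" for v
    using that
  proof (induction rule: converse_rtrancl_induct)
    case base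
    show ?case by simp
  next
    case (step v w)
    have "(v, w) \<noteq> (i, j)"
      using step.hyps acyclic_tree by (metis acyclic_def old.prod.inject rtrancl_into_trancl2)
    then have "(w, v) \<in> S \<union> S\<inverse>" using step.hyps unfolding S_def by auto
    then show ?case using step.IH by (meson rtrancl_into_rtrancl)
  qed
  show ?thesis
    unfolding tree_comp_def e S_def[symmetric] using desc conn by auto
qed

lemma tree_comp_subset:
  assumes "e \<in> T"
  shows "tree_comp T e \<subseteq> V"
proof
  fix v assume "v \<in> tree_comp T e"
  then have "(v, fst e) \<in> T\<^sup>*" using tree_comp_eq_descendants assms by auto
  then have "v = fst e \<or> (\<exists>c. (v, c) \<in> T)" by (meson converse_rtranclE)
  then show "v \<in> V" using assms tree_edges by (cases e) auto
qed

definition root_path :: "'a \<Rightarrow> ('a \<times> 'a) set"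
  where "root_path v = {e \<in> T. (v, fst e) \<in> T\<^sup>*}"

lemma root_path_root: "root_path \<rho> = {}"
  unfolding root_path_def using root_no_parent by (auto elim: converse_rtranclE)

lemma root_path_step:
  assumes "(v, w) \<in> T"
  shows "root_path v = insert (v, w) (root_path w)" and "(v, w) \<notin> root_path w"
proof -
  show "root_path v = insert (v, w) (root_path w)"
  proof (intro set_eqI iffI)
    fix e assume e: "e \<in> root_path v"
    then have "v = fst e \<or> (\<exists>c. (v, c) \<in> T \<and> (c, fst e) \<in> T\<^sup>*)"
      unfolding root_path_def by (auto elim: converse_rtranclE)
    then show "e \<in> insert (v, w) (root_path w)"
      using e assms parent_unique unfolding root_path_def by (cases e) auto
  next
    fix e assume "e \<in> insert (v, w) (root_path w)"
    then show "e \<in> root_path v"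
      using assms unfolding root_path_def by (auto intro: converse_rtrancl_into_rtrancl)
  qed
  show "(v, w) \<notin> root_path w"
    using assms acyclic_tree unfolding root_path_def acyclic_def
    by (auto dest: rtrancl_into_trancl2)
qed

lemma sum_root_path:
  fixes z :: "'a \<Rightarrow> 'b::ab_group_add"
  assumes "(v, \<rho>) \<in> T\<^sup>*"
  shows "(\<Sum>e\<in>root_path v. z (fst e) - z (snd e)) = z v - z \<rho>"
  using assms
proof (induction rule: converse_rtrancl_induct)
  case base
  show ?case by (simp add: root_path_root)
next
  case (step v w)
  have "finite (root_path w)" using finite_tree_edges unfolding root_path_def by simp
  then show ?case using step root_path_step[OF step.hyps(1)] by simp
qed

lemma sum_tree_comp_indicator:
  assumes "v \<in> V"
  shows "(\<Sum>e\<in>T. (z (fst e) - z (snd e)) * indicator (tree_comp T e) v) = z v - (z \<rho> :: real)"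
proof -
  have "(\<Sum>e\<in>T. (z (fst e) - z (snd e)) * indicator (tree_comp T e) v)
      = (\<Sum>e\<in>T. if e \<in> root_path v then z (fst e) - z (snd e) else 0)"
    by (intro sum.cong) (auto simp: tree_comp_eq_descendants root_path_def)
  also have "\<dots> = (\<Sum>e\<in>root_path v. z (fst e) - z (snd e))"
    unfolding root_path_def by (simp add: sum.inter_filter finite_tree_edges)
  also have "\<dots> = z v - z \<rho>"
    using sum_root_path reaches_root assms by blast
  finally show ?thesis .
qed

end

lemma rooted_spanning_tree_imp_rooted_tree:
  assumes "undirected_graph V E" and "rooted_spanning_tree V E \<rho> T"
  shows "rooted_tree V T \<rho>"
  using assms unfolding undirected_graph_def rooted_spanning_tree_def
  by unfold_locales auto

lemma cut_edges_nonempty: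
  assumes "connected_graph V E" and "u \<in> V" and "v \<in> V" and "u \<in> C" and "v \<notin> C"
  shows "cut_edges E C \<noteq> {}"
proof
  assume no_cut: "cut_edges E C = {}"
  have "w \<in> C" if "(u, w) \<in> (E \<union> E\<inverse>)\<^sup>*" for w
    using that
  proof (induction rule: rtrancl_induct)
    case base
    show ?case using assms(4) .
  next
    case (step w w')
    then show ?case using no_cut unfolding cut_edges_def by blast
  qed
  then show False using assms unfolding connected_graph_def by blast
qed

locale network_spanning_tree =
  fixes V :: "'a set" and E T :: "('a \<times> 'a) set" and \<rho> :: 'a and r :: "'a \<Rightarrow> 'a \<Rightarrow> real"
  assumes graph: "undirected_graph V E"
    and connected: "connected_graph V E"
    and spanning_tree: "rooted_spanning_tree V E \<rho> T"
    and r_sym: "r i j = r j i"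
    and r_pos: "(i, j) \<in> E \<Longrightarrow> r i j > 0"
begin

sublocale rooted_tree V T \<rho>
  using graph spanning_tree by (rule rooted_spanning_tree_imp_rooted_tree)

lemma graph_edges: "E \<subseteq> V \<times> V"
  using graph unfolding undirected_graph_def by simp

lemma finite_edges: "finite E"
  using graph_edges finite_vertices by (meson finite_SigmaI finite_subset)

lemma tree_in_graph: "T \<subseteq> E \<union> E\<inverse>"
  using spanning_tree unfolding rooted_spanning_tree_def by simp

lemma r_pos_tree: "e \<in> T \<Longrightarrow> r (fst e) (snd e) > 0"
  using tree_in_graph r_pos r_sym by (cases e) force

lemma tree_sum_le_lap_form:
  "(\<Sum>e\<in>T. (z (fst e) - z (snd e))\<^sup>2 / r (fst e) (snd e)) \<le> lap_form E r z"
proof -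
  let ?h = "\<lambda>p. (z (fst p) - z (snd p))\<^sup>2 / r (fst p) (snd p)"
  \<comment> \<open>\<open>g\<close> gives each tree edge its orientation in \<open>E\<close>;
    \<open>T\<close> has no antiparallel pair, so \<open>g\<close> is injective.\<close>
  define g where "g e = (if e \<in> E then e else prod.swap e)" for e
  have "inj_on g T"
  proof (rule inj_onI)
    fix e e' assume "e \<in> T" "e' \<in> T" "g e = g e'"
    moreover have "prod.swap e \<notin> T" if "e \<in> T" for e
      using that acyclic_tree unfolding acyclic_def by (cases e) (auto dest: trancl_into_trancl2)
    ultimately show "e = e'" unfolding g_def by (metis swap_swap)
  qed
  have "?h (g e) = ?h e" for e
    unfolding g_def using r_sym by (cases e) (auto simp: power2_commute)
  then have "(\<Sum>e\<in>T. ?h e) = (\<Sum>p\<in>g ` T. ?h p)"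
    using sum.reindex[OF \<open>inj_on g T\<close>, of ?h] by simp
  also have "\<dots> \<le> (\<Sum>p\<in>E. ?h p)"
    using finite_edges tree_in_graph unfolding g_def
    by (intro sum_mono2) (auto simp: r_pos less_imp_le)
  finally show ?thesis unfolding lap_form_def split_def .
qed

lemma linear_term_tree_decomposition:
  assumes "(\<Sum>v\<in>V. b v) = 0"
  shows "(\<Sum>v\<in>V. b v * z v) - lap_bilinear E r z x
       = (\<Sum>e\<in>T. (z (fst e) - z (snd e)) * (bset b (tree_comp T e) - fcut E r x (tree_comp T e)))"
proof -
  let ?w = "\<lambda>e. z (fst e) - z (snd e)"
  have b_part: "(\<Sum>e\<in>T. ?w e * bset b (tree_comp T e)) = (\<Sum>v\<in>V. b v * z v)"
  proof -
    have "(\<Sum>e\<in>T. ?w e * bset b (tree_comp T e))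
        = (\<Sum>v\<in>V. b v * (\<Sum>e\<in>T. ?w e * indicator (tree_comp T e) v))"
      by (simp add: bset_eq_sum_indicator[OF finite_vertices tree_comp_subset] sum_distrib_left
          mult_ac flip: sum.swap[of _ T])
    also have "\<dots> = (\<Sum>v\<in>V. b v * (z v - z \<rho>))"
      by (intro sum.cong) (simp_all add: sum_tree_comp_indicator)
    also have "\<dots> = (\<Sum>v\<in>V. b v * z v)"
      using assms by (simp add: right_diff_distrib sum_subtractf flip: sum_distrib_right)
    finally show ?thesis .
  qed
  have f_part: "(\<Sum>e\<in>T. ?w e * fcut E r x (tree_comp T e)) = lap_bilinear E r z x"
  proof -
    have "(\<Sum>e\<in>T. ?w e * fcut E r x (tree_comp T e))
        = lap_bilinear E r (\<lambda>v. \<Sum>e\<in>T. ?w e * indicator (tree_comp T e) v) x"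
      by (simp add: lap_bilinear_sum_left fcut_eq_lap_bilinear finite_edges)
    also have "\<dots> = lap_bilinear E r (\<lambda>v. z v - z \<rho>) x"
      using graph_edges by (rule lap_bilinear_cong_left) (rule sum_tree_comp_indicator)
    also have "\<dots> = lap_bilinear E r z x"
      by (rule lap_bilinear_shift_left)
    finally show ?thesis .
  qed
  show ?thesis
    by (simp add: b_part f_part right_diff_distrib sum_subtractf)
qed

lemma Bobj_diff_le_tree_sum:
  assumes "(\<Sum>v\<in>V. b v) = 0"
  shows "Bobj V E r b y - Bobj V E r b x
      \<le> (\<Sum>e\<in>T. r (fst e) (snd e) * (bset b (tree_comp T e) - fcut E r x (tree_comp T e))\<^sup>2 / 2)"
proof -
  define z where "z v = y v - x v" for v
  let ?w = "\<lambda>e. z (fst e) - z (snd e)"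
  let ?D = "\<lambda>e. bset b (tree_comp T e) - fcut E r x (tree_comp T e)"
  let ?r = "\<lambda>e. r (fst e) (snd e)"
  have "y = (\<lambda>v. x v + z v)" by (simp add: z_def)
  then have "Bobj V E r b y - Bobj V E r b x = (\<Sum>e\<in>T. ?w e * ?D e) - lap_form E r z / 2"
    by (simp add: Bobj_add linear_term_tree_decomposition[OF assms])
  also have "\<dots> \<le> (\<Sum>e\<in>T. ?w e * ?D e) - (\<Sum>e\<in>T. (?w e)\<^sup>2 / ?r e) / 2"
    using tree_sum_le_lap_form[of z] by simp
  also have "\<dots> = (\<Sum>e\<in>T. ?w e * ?D e - (?w e)\<^sup>2 / ?r e / 2)"
    by (simp add: sum_subtractf sum_divide_distrib)
  also have "\<dots> \<le> (\<Sum>e\<in>T. ?r e * (?D e)\<^sup>2 / 2)"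
  proof (rule sum_mono)
    fix e assume "e \<in> T"
    then have "?r e > 0" by (rule r_pos_tree)
    moreover have "0 \<le> (?r e * ?D e - ?w e)\<^sup>2 / ?r e / 2" using calculation by simp
    ultimately show "?w e * ?D e - (?w e)\<^sup>2 / ?r e / 2 \<le> ?r e * (?D e)\<^sup>2 / 2"
      by (simp add: field_simps power2_eq_square)
  qed
  finally show ?thesis .
qed

lemma Rcut_tree_comp_pos:
  assumes "e \<in> T"
  shows "Rcut E r (tree_comp T e) > 0"
proof -
  let ?C = "tree_comp T e"
  have tail: "fst e \<in> ?C"
    unfolding tree_comp_eq_descendants[OF assms] by simp
  have head: "snd e \<notin> ?C"
  proof
    assume "snd e \<in> ?C"
    then have "(snd e, fst e) \<in> T\<^sup>*"
      unfolding tree_comp_eq_descendants[OF assms] by simp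
    with assms have "(fst e, fst e) \<in> T\<^sup>+"
      by (metis prod.collapse rtrancl_into_trancl2)
    with acyclic_tree show False
      unfolding acyclic_def by blast
  qed
  have "fst e \<in> V" and "snd e \<in> V"
    using assms tree_edges by auto
  then have "cut_edges E ?C \<noteq> {}"
    using cut_edges_nonempty[OF connected _ _ tail head] by blast
  moreover have "finite (cut_edges E ?C)"
    using finite_edges by (rule rev_finite_subset) (auto simp: cut_edges_def)
  moreover have "0 < 1 / r k l" if "(k, l) \<in> cut_edges E ?C" for k l
    using that r_pos by (simp add: cut_edges_def)
  ultimately have "(\<Sum>(k,l)\<in>cut_edges E ?C. 1 / r k l) > 0"
    by (intro sum_pos) auto
  then show ?thesis
    unfolding Rcut_def by simp
qed

lemma tau_pos:
  assumes "T \<noteq> {}"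
  shows "tau E T r > 0"
proof -
  have "r i j / Rcut E r (tree_comp T (i, j)) > 0" if "(i, j) \<in> T" for i j
    using r_pos_tree[OF that] Rcut_tree_comp_pos[OF that] by simp
  then show ?thesis unfolding tau_def using finite_tree_edges assms by (intro sum_pos) auto
qed

lemma expected_Bobj_kosz_step:
  assumes "T \<noteq> {}"
  shows "(\<Sum>e\<in>T. sample_prob E T r e * Bobj V E r b (kosz_step E T r b x e))
       = Bobj V E r b x + (\<Sum>e\<in>T. r (fst e) (snd e)
           * (bset b (tree_comp T e) - fcut E r x (tree_comp T e))\<^sup>2 / 2) / tau E T r"
proof -
  let ?p = "\<lambda>e. r (fst e) (snd e) / Rcut E r (tree_comp T e)"
  let ?g = "\<lambda>e. r (fst e) (snd e) * (bset b (tree_comp T e) - fcut E r x (tree_comp T e))\<^sup>2 / 2"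
  have step: "sample_prob E T r e * Bobj V E r b (kosz_step E T r b x e)
      = (?p e * Bobj V E r b x + ?g e) / tau E T r" if "e \<in> T" for e
    using Rcut_tree_comp_pos[OF that]
    unfolding sample_prob_def Bobj_kosz_step[OF finite_vertices finite_edges tree_comp_subset[OF that]]
    by (simp add: field_simps)
  have p_sum: "(\<Sum>e\<in>T. ?p e) = tau E T r"
    unfolding tau_def by (simp add: split_def)
  have "(\<Sum>e\<in>T. sample_prob E T r e * Bobj V E r b (kosz_step E T r b x e))
      = (\<Sum>e\<in>T. (?p e * Bobj V E r b x + ?g e) / tau E T r)"
    by (intro sum.cong refl step)
  also have "\<dots> = ((\<Sum>e\<in>T. ?p e) * Bobj V E r b x + (\<Sum>e\<in>T. ?g e)) / tau E T r"
    by (simp only: sum.distrib sum_distrib_right flip: sum_divide_distrib)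
  also have "\<dots> = Bobj V E r b x + (\<Sum>e\<in>T. ?g e) / tau E T r"
    using tau_pos[OF assms] unfolding p_sum by (simp add: add_divide_distrib)
  finally show ?thesis .
qed

end

theorem mainTheorem12:
  fixes V :: "'a set" and E T :: "('a \<times> 'a) set" and \<rho> :: 'a
    and r :: "'a \<Rightarrow> 'a \<Rightarrow> real" and b x xstar :: "'a \<Rightarrow> real"
  assumes "undirected_graph V E" and "connected_graph V E"
    and "\<forall>i j. r i j = r j i" and "\<forall>(i,j)\<in>E. r i j > 0"
    and "(\<Sum>v\<in>V. b v) = 0"
    and "\<forall>y. Bobj V E r b y \<le> Bobj V E r b xstar"
    and "rooted_spanning_tree V E \<rho> T"
  shows "Bobj V E r b xstar
           - (\<Sum>e\<in>T. sample_prob E T r e * Bobj V E r b (kosz_step E T r b x e))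
         \<le> (1 - 1 / tau E T r) * (Bobj V E r b xstar - Bobj V E r b x)"
proof -
  interpret network_spanning_tree V E T \<rho> r
    using assms(1,2,7,3,4) by unfold_locales auto
  let ?B = "Bobj V E r b"
  let ?S = "\<Sum>e\<in>T. r (fst e) (snd e) * (bset b (tree_comp T e) - fcut E r x (tree_comp T e))\<^sup>2 / 2"
  show ?thesis
  proof (cases "T = {}")
    case True
    \<comment> \<open>Then \<open>\<tau> = 0\<close>, so \<open>1 / \<tau> = 0\<close> and the claim reduces to \<open>B(x) \<le> 0 = B(0)\<close>.\<close>
    have "?B x \<le> ?B (\<lambda>_. 0)"
      using Bobj_diff_le_tree_sum[OF assms(5), of x "\<lambda>_. 0"] True by simp
    also have "?B (\<lambda>_. 0) = 0" by (simp add: Bobj_def lap_form_def)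
    finally show ?thesis using True by (simp add: tau_def)
  next
    case False
    have "(?B xstar - ?B x) / tau E T r \<le> ?S / tau E T r"
      using Bobj_diff_le_tree_sum[OF assms(5)] tau_pos[OF False] by (simp add: divide_right_mono)
    then show ?thesis
      unfolding expected_Bobj_kosz_step[OF False] by (simp add: algebra_simps diff_divide_distrib)
  qed
qed

end
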